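(* Let $X$ be either $c_0$ or $\ell^p$ for some $1\le p<\infty$ (complex sequences indexed by $n\ge 0$). There exists a bounded sequence $w=(w_n)_{n\ge 0}$ of positive real numbers such that the weighted backward shift $B_w$ on $X$ is strongly topologically transitive but not mixing.
   Context: For a bounded sequence $w=(w_n)_{n\ge0}$ of positive numbers, the weighted backward shift $B_w$ on $X$ is the bounded linear operator defined on the canonical basis $(e_n)_{n\ge0}$ by $B_we_0=0$ and $B_we_n=w_ne_{n-1}$ for $n\ge1$. For an operator $T$ on a topological vector space $X$ and nonempty open sets $U,V\subseteq X$, let $N(U,V)=\{n\in\mathbb{N}_0: T^n(U)\cap V\neq\emptyset\}$. $T$ is mixing if $N(U,V)$ is cofinite for all nonempty open $U,V$. $T$ is strongly topologically transitive if for every nonempty open $U\subseteq X$, $X\setminus\{0\}\subseteq\bigcup_{n=0}^\infty T^n(U)$. *)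

theory Defs
  imports "HOL-Analysis.Analysis"
begin

definition c0_space :: "(nat \<Rightarrow> complex) set" where
  "c0_space = {x. x \<longlonglongrightarrow> 0}"

definition c0_norm :: "(nat \<Rightarrow> complex) \<Rightarrow> real" where
  "c0_norm x = (SUP n. norm (x n))"

definition lp_space :: "real \<Rightarrow> (nat \<Rightarrow> complex) set" where
  "lp_space p = {x. summable (\<lambda>n. norm (x n) powr p)}"

definition lp_norm :: "real \<Rightarrow> (nat \<Rightarrow> complex) \<Rightarrow> real" where
  "lp_norm p x = (\<Sum>n. norm (x n) powr p) powr (1 / p)"

definition seq_open :: "(nat \<Rightarrow> complex) set \<Rightarrow> ((nat \<Rightarrow> complex) \<Rightarrow> real)
    \<Rightarrow> (nat \<Rightarrow> complex) set \<Rightarrow> bool" where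
  "seq_open X N U \<longleftrightarrow> U \<subseteq> X \<and>
     (\<forall>x\<in>U. \<exists>e>0. \<forall>y\<in>X. N (\<lambda>n. y n - x n) < e \<longrightarrow> y \<in> U)"

text \<open>Weighted backward shift: B_w e_0 = 0, B_w e_n = w_n e_(n-1),
  i.e. (B_w x)_m = w_(m+1) x_(m+1).\<close>
definition bshift :: "(nat \<Rightarrow> real) \<Rightarrow> (nat \<Rightarrow> complex) \<Rightarrow> (nat \<Rightarrow> complex)" where
  "bshift w x = (\<lambda>m. complex_of_real (w (Suc m)) * x (Suc m))"

definition return_set :: "((nat \<Rightarrow> complex) \<Rightarrow> (nat \<Rightarrow> complex))
    \<Rightarrow> (nat \<Rightarrow> complex) set \<Rightarrow> (nat \<Rightarrow> complex) set \<Rightarrow> nat set" where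
  "return_set T U V = {n. ((T ^^ n) ` U) \<inter> V \<noteq> {}}"

definition mixing_on :: "(nat \<Rightarrow> complex) set \<Rightarrow> ((nat \<Rightarrow> complex) \<Rightarrow> real)
    \<Rightarrow> ((nat \<Rightarrow> complex) \<Rightarrow> (nat \<Rightarrow> complex)) \<Rightarrow> bool" where
  "mixing_on X N T \<longleftrightarrow> (\<forall>U V. seq_open X N U \<and> U \<noteq> {} \<and> seq_open X N V \<and> V \<noteq> {}
       \<longrightarrow> finite (UNIV - return_set T U V))"

definition strongly_top_transitive_on :: "(nat \<Rightarrow> complex) set \<Rightarrow> ((nat \<Rightarrow> complex) \<Rightarrow> real)
    \<Rightarrow> ((nat \<Rightarrow> complex) \<Rightarrow> (nat \<Rightarrow> complex)) \<Rightarrow> bool" where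
  "strongly_top_transitive_on X N T \<longleftrightarrow> (\<forall>U. seq_open X N U \<and> U \<noteq> {}
       \<longrightarrow> X - {(\<lambda>n. 0)} \<subseteq> (\<Union>n. (T ^^ n) ` U))"

end

theory Submission
  imports Defs
begin

text \<open>Write P m for the partial product w 1 * ... * w m, so that
  (B_w^n x) m = P (m + n) / P m * x (m + n). We take P m = 2 powr h m, where h is the maximum of
  periodic tents: the i-th tent has height i + 1 at scale (i + 2)! and repeats with period (i + 3)!.
  Since h vanishes at infinitely many k, at those times B_w^k moves coordinate k to coordinate 0
  without enlarging it, so vectors with all coordinates small never come near e_0: B_w is not
  mixing. Along the shifts n = (t + 2)!, on the other hand, h (m + n) \<ge> h m - 1 for all m and
  h (m + n) \<ge> t for small m; hence every y has a B_w^n-preimage that agrees with a given x0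
  below n and has a small tail, which gives strong transitivity.\<close>

section \<open>Weighted backward shifts with prescribed partial products\<close>

lemma strongly_top_transitive_onI:
  assumes approx: "\<And>x0 y e. x0 \<in> X \<Longrightarrow> y \<in> X \<Longrightarrow> 0 < e \<Longrightarrow>
             \<exists>n. \<exists>x\<in>X. N (\<lambda>j. x j - x0 j) < e \<and> (T ^^ n) x = y"
  shows "strongly_top_transitive_on X N T"
  unfolding strongly_top_transitive_on_def
proof (intro allI impI subsetI)
  fix U y assume U: "seq_open X N U \<and> U \<noteq> {}" and y: "y \<in> X - {\<lambda>n. 0}"
  then obtain x0 e where "x0 \<in> X" "0 < e" and ball: "\<forall>z\<in>X. N (\<lambda>j. z j - x0 j) < e \<longrightarrow> z \<in> U"
    unfolding seq_open_def by blast
  with y approx obtain n x where "x \<in> X" "N (\<lambda>j. x j - x0 j) < e" "(T ^^ n) x = y"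
    by blast
  with ball show "y \<in> (\<Union>n. (T ^^ n) ` U)" by blast
qed

lemma seq_open_coordinate_ball:
  assumes coord: "\<And>x y. x \<in> X \<Longrightarrow> y \<in> X \<Longrightarrow> norm (y j - x j) \<le> N (\<lambda>n. y n - x n)"
  shows "seq_open X N {x \<in> X. norm (x j - c) < r}"
  unfolding seq_open_def
proof (intro conjI ballI)
  fix x assume x: "x \<in> {x \<in> X. norm (x j - c) < r}"
  show "\<exists>e>0. \<forall>y\<in>X. N (\<lambda>n. y n - x n) < e \<longrightarrow> y \<in> {x \<in> X. norm (x j - c) < r}"
  proof (intro exI[of _ "r - norm (x j - c)"] conjI ballI impI)
    fix y assume "y \<in> X" "N (\<lambda>n. y n - x n) < r - norm (x j - c)"
    moreover have "norm (y j - c) \<le> norm (y j - x j) + norm (x j - c)"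
      using norm_triangle_ineq[of "y j - x j" "x j - c"] by simp
    ultimately show "y \<in> {x \<in> X. norm (x j - c) < r}" using coord[of x y] x by auto
  qed (use x in auto)
qed auto

lemma seq_open_uniform_ball:
  assumes coord: "\<And>x y j. x \<in> X \<Longrightarrow> y \<in> X \<Longrightarrow> norm (y j - x j) \<le> N (\<lambda>n. y n - x n)"
  shows "seq_open X N {x \<in> X. \<exists>r<R. \<forall>j. norm (x j) \<le> r}"
  unfolding seq_open_def
proof (intro conjI ballI)
  fix x assume "x \<in> {x \<in> X. \<exists>r<R. \<forall>j. norm (x j) \<le> r}"
  then obtain r where x: "x \<in> X" "r < R" "\<forall>j. norm (x j) \<le> r" by blast
  show "\<exists>e>0. \<forall>y\<in>X. N (\<lambda>n. y n - x n) < e \<longrightarrow> y \<in> {x \<in> X. \<exists>r<R. \<forall>j. norm (x j) \<le> r}"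
  proof (intro exI[of _ "(R - r) / 2"] conjI ballI impI)
    fix y assume y: "y \<in> X" "N (\<lambda>n. y n - x n) < (R - r) / 2"
    have "norm (y j) \<le> r + (R - r) / 2" for j
    proof -
      have "norm (y j) \<le> norm (x j) + norm (y j - x j)"
        using norm_triangle_ineq[of "x j" "y j - x j"] by simp
      then show ?thesis using coord[OF x(1) y(1), of j] x(3)[rule_format, of j] y(2) by linarith
    qed
    moreover have "r + (R - r) / 2 < R" using x(2) by (simp add: field_simps)
    ultimately show "y \<in> {x \<in> X. \<exists>r<R. \<forall>j. norm (x j) \<le> r}" using y(1) by blast
  qed (use x in auto)
qed auto

text \<open>The weights whose partial products w 1 * ... * w m are P m / P 0. Only the weights
  w k with k \<ge> 1 enter bshift; truncated subtraction gives w 0 = 1.\<close>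
definition prod_weights :: "(nat \<Rightarrow> real) \<Rightarrow> nat \<Rightarrow> real" where
  "prod_weights P k = P k / P (k - 1)"

lemma prod_weights_pos: "(\<And>m. 0 < P m) \<Longrightarrow> 0 < prod_weights P k"
  by (simp add: prod_weights_def)

lemma bdd_above_prod_weights:
  assumes "\<And>m. 0 < P m" "\<And>m. P (Suc m) \<le> C * P m"
  shows "bdd_above (range (prod_weights P))"
proof (rule bdd_aboveI2)
  fix k show "prod_weights P k \<le> max 1 C"
    using assms(1)[of "k - 1"] assms(2)[of "k - 1"]
    by (cases k) (auto simp: prod_weights_def pos_divide_le_eq max_mult_distrib_right)
qed

lemma funpow_bshift_prod_weights:
  assumes P: "\<And>m. 0 < P m"
  shows "(bshift (prod_weights P) ^^ n) x m = of_real (P (m + n) / P m) * x (m + n)"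
proof (induction n arbitrary: m)
  case 0
  show ?case using P[of m] by simp
next
  case (Suc n)
  have "(bshift (prod_weights P) ^^ Suc n) x m
      = of_real (P (Suc m) / P m * (P (Suc m + n) / P (Suc m))) * x (Suc m + n)"
    by (simp add: bshift_def Suc prod_weights_def)
  also have "P (Suc m) / P m * (P (Suc m + n) / P (Suc m)) = P (m + Suc n) / P m"
    using P[of "Suc m"] by simp
  finally show ?case by simp
qed

definition shift_preimage ::
    "(nat \<Rightarrow> real) \<Rightarrow> nat \<Rightarrow> (nat \<Rightarrow> complex) \<Rightarrow> (nat \<Rightarrow> complex) \<Rightarrow> nat \<Rightarrow> complex" where
  "shift_preimage P n x0 y j = (if j < n then x0 j else of_real (P (j - n) / P j) * y (j - n))"

lemma shift_preimage_add:
  "shift_preimage P n x0 y (m + n) = of_real (P m / P (m + n)) * y m"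
  by (simp add: shift_preimage_def)

lemma funpow_bshift_shift_preimage:
  assumes P: "\<And>m. 0 < P m"
  shows "(bshift (prod_weights P) ^^ n) (shift_preimage P n x0 y) = y"
proof
  fix m
  have "(bshift (prod_weights P) ^^ n) (shift_preimage P n x0 y) m
      = of_real (P (m + n) / P m * (P m / P (m + n))) * y m"
    by (simp only: funpow_bshift_prod_weights[OF P] shift_preimage_add of_real_mult mult.assoc)
  also have "P (m + n) / P m * (P m / P (m + n)) = 1"
    using P[of m] P[of "m + n"] by simp
  finally show "(bshift (prod_weights P) ^^ n) (shift_preimage P n x0 y) m = y m" by simp
qed

lemma norm_shift_preimage_le:
  assumes P: "\<And>m. 0 < P m" and "P m \<le> c * P (m + n)"
  shows "norm (shift_preimage P n x0 y (m + n)) \<le> c * norm (y m)"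
proof -
  have "norm (shift_preimage P n x0 y (m + n)) = \<bar>P m / P (m + n)\<bar> * norm (y m)"
    by (simp only: shift_preimage_add norm_mult norm_of_real)
  also have "\<dots> = P m / P (m + n) * norm (y m)"
    using P[of m] P[of "m + n"] by simp
  also have "\<dots> \<le> c * norm (y m)"
    using assms P[of "m + n"] by (intro mult_right_mono) (auto simp: pos_divide_le_eq)
  finally show ?thesis .
qed

lemma not_mixing_on_bshift_prod_weights:
  assumes P: "\<And>m. 0 < P m" and returns: "infinite {k. P k \<le> P 0}"
    and X: "(\<lambda>n. 0) \<in> X" "(\<lambda>n. if n = 0 then 1 else 0) \<in> X"
    and coord: "\<And>x y j. x \<in> X \<Longrightarrow> y \<in> X \<Longrightarrow> norm (y j - x j) \<le> N (\<lambda>n. y n - x n)"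
  shows "\<not> mixing_on X N (bshift (prod_weights P))"
proof
  define U where "U = {x \<in> X. \<exists>r<1/2. \<forall>j. norm (x j) \<le> r}"
  define V where "V = {v \<in> X. norm (v 0 - 1) < 1/2}"
  assume "mixing_on X N (bshift (prod_weights P))"
  moreover have "seq_open X N U" "seq_open X N V"
    unfolding U_def V_def using coord by (blast intro: seq_open_uniform_ball seq_open_coordinate_ball)+
  moreover have "U \<noteq> {}" "V \<noteq> {}"
    using X by (auto simp: U_def V_def intro!: exI[of _ 0])
  ultimately have fin: "finite (UNIV - return_set (bshift (prod_weights P)) U V)"
    unfolding mixing_on_def by blast
  have "k \<notin> return_set (bshift (prod_weights P)) U V" if k: "P k \<le> P 0" for k
  proof
    assume "k \<in> return_set (bshift (prod_weights P)) U V"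
    then obtain x r where x: "(bshift (prod_weights P) ^^ k) x \<in> V" "r < 1/2" "norm (x k) \<le> r"
      by (auto simp: return_set_def U_def)
    have "norm ((bshift (prod_weights P) ^^ k) x 0) = \<bar>P k / P 0\<bar> * norm (x k)"
      by (simp only: funpow_bshift_prod_weights[OF P] norm_mult norm_of_real add_0)
    also have "\<dots> = P k / P 0 * norm (x k)"
      using P[of 0] P[of k] by simp
    also have "\<dots> \<le> norm (x k)"
      using k P[of 0] P[of k] by (intro mult_left_le_one_le) auto
    finally have "norm ((bshift (prod_weights P) ^^ k) x 0) < 1/2" using x by simp
    with x(1) show False
      using norm_triangle_ineq2[of 1 "(bshift (prod_weights P) ^^ k) x 0"]
      by (auto simp: V_def norm_minus_commute)
  qed
  then have "{k. P k \<le> P 0} \<subseteq> UNIV - return_set (bshift (prod_weights P)) U V" by blast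
  with fin returns show False using finite_subset by blast
qed

definition expanding_shifts :: "(nat \<Rightarrow> real) \<Rightarrow> real \<Rightarrow> bool" where
  "expanding_shifts P C \<longleftrightarrow> (\<forall>M K \<epsilon>. 0 < \<epsilon> \<longrightarrow>
     (\<exists>n\<ge>K. (\<forall>m. P m \<le> C * P (m + n)) \<and> (\<forall>m<M. P m \<le> \<epsilon> * P (m + n))))"

lemma expanding_shiftsD:
  assumes "expanding_shifts P C" "0 < \<epsilon>"
  obtains n where "K \<le> n" "\<And>m. P m \<le> C * P (m + n)" "\<And>m. m < M \<Longrightarrow> P m \<le> \<epsilon> * P (m + n)"
  using assms unfolding expanding_shifts_def by blast

lemma expanding_shifts_const_pos:
  assumes "\<And>m. 0 < P m" "expanding_shifts P C"
  shows "0 < C"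
proof -
  obtain n where "P 0 \<le> C * P n"
    using expanding_shiftsD[OF assms(2) zero_less_one] by (metis add_0)
  with assms(1)[of 0] have "0 < C * P n" by linarith
  with assms(1)[of n] show ?thesis by (simp add: zero_less_mult_iff)
qed

section \<open>The spaces c0 and lp\<close>

lemma c0_shift_preimage_tail_small:
  assumes P: "\<And>m. 0 < P m" and exp: "expanding_shifts P C"
    and y: "y \<in> c0_space" and \<delta>: "0 < \<delta>"
  obtains n where "K \<le> n" "(\<lambda>m. shift_preimage P n x0 y (m + n)) \<longlonglongrightarrow> 0"
    "\<And>m. norm (shift_preimage P n x0 y (m + n)) \<le> \<delta>"
proof -
  have C: "0 < C" using expanding_shifts_const_pos[OF P exp] .
  have y_lim: "y \<longlonglongrightarrow> 0" using y by (simp add: c0_space_def)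
  obtain M where M: "\<And>m. M \<le> m \<Longrightarrow> norm (y m) < \<delta> / C"
    using LIMSEQ_D[OF y_lim, of "\<delta> / C"] \<delta> C by auto
  obtain B where B: "0 < B" "\<And>m. norm (y m) \<le> B"
    using convergent_imp_Bseq[OF convergentI[OF y_lim]] by (auto simp: Bseq_def)
  obtain n where n: "K \<le> n" "\<And>m. P m \<le> C * P (m + n)"
    "\<And>m. m < M \<Longrightarrow> P m \<le> \<delta> / B * P (m + n)"
    using expanding_shiftsD[OF exp, of "\<delta> / B"] \<delta> B(1) by auto
  define x where "x = shift_preimage P n x0 y"
  have bounded: "norm (x (m + n)) \<le> C * norm (y m)" for m
    unfolding x_def using P n(2) by (rule norm_shift_preimage_le)
  have "(\<lambda>m. x (m + n)) \<longlonglongrightarrow> 0"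
  proof (rule Lim_null_comparison)
    show "\<forall>\<^sub>F m in sequentially. norm (x (m + n)) \<le> C * norm (y m)"
      using bounded by simp
    show "(\<lambda>m. C * norm (y m)) \<longlonglongrightarrow> 0"
      using tendsto_mult_right_zero[OF tendsto_norm_zero[OF y_lim]] .
  qed
  moreover have "norm (x (m + n)) \<le> \<delta>" for m
  proof (cases "M \<le> m")
    case True
    have "norm (x (m + n)) \<le> C * norm (y m)" by (rule bounded)
    also have "\<dots> \<le> \<delta>" using M[OF True] C by (simp add: field_simps)
    finally show ?thesis .
  next
    case False
    have "norm (x (m + n)) \<le> \<delta> / B * norm (y m)"
      unfolding x_def using P n(3) False by (intro norm_shift_preimage_le) auto
    also have "\<dots> \<le> \<delta> / B * B" using B \<delta> by (intro mult_left_mono) auto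
    finally show ?thesis using B by simp
  qed
  ultimately show ?thesis using that n(1) unfolding x_def by blast
qed

lemma c0_strongly_top_transitive_bshift:
  assumes P: "\<And>m. 0 < P m" and exp: "expanding_shifts P C"
  shows "strongly_top_transitive_on c0_space c0_norm (bshift (prod_weights P))"
proof (rule strongly_top_transitive_onI)
  fix x0 y and e :: real
  assume x0: "x0 \<in> c0_space" and y: "y \<in> c0_space" and e: "0 < e"
  obtain K where K: "\<And>j. K \<le> j \<Longrightarrow> norm (x0 j) < e / 4"
    using x0 LIMSEQ_D[of x0 0 "e / 4"] e by (auto simp: c0_space_def)
  obtain n where n: "K \<le> n" and lim: "(\<lambda>m. shift_preimage P n x0 y (m + n)) \<longlonglongrightarrow> 0"
    and tail: "\<And>m. norm (shift_preimage P n x0 y (m + n)) \<le> e / 4"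
    using c0_shift_preimage_tail_small[OF P exp y, of "e / 4"] e by auto
  define x where "x = shift_preimage P n x0 y"
  have "x \<in> c0_space"
    using LIMSEQ_offset[of x n 0] lim by (simp add: c0_space_def x_def)
  moreover have "c0_norm (\<lambda>j. x j - x0 j) < e"
  proof -
    have "norm (x j - x0 j) \<le> e / 2" for j
    proof (cases "j < n")
      case False
      then obtain m where "j = m + n" by (metis add.commute le_add_diff_inverse not_less)
      then show ?thesis
        using tail[of m] K[of j] n norm_triangle_ineq4[of "x j" "x0 j"] by (simp add: x_def)
    qed (use e in \<open>simp add: x_def shift_preimage_def\<close>)
    then have "c0_norm (\<lambda>j. x j - x0 j) \<le> e / 2"
      unfolding c0_norm_def by (intro cSUP_least) auto
    with e show ?thesis by simp
  qed
  moreover have "(bshift (prod_weights P) ^^ n) x = y"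
    unfolding x_def using P by (rule funpow_bshift_shift_preimage)
  ultimately show "\<exists>n. \<exists>x\<in>c0_space. c0_norm (\<lambda>j. x j - x0 j) < e \<and> (bshift (prod_weights P) ^^ n) x = y"
    by blast
qed

lemma norm_diff_powr_le:
  fixes u v :: "'a :: real_normed_vector"
  assumes "0 \<le> p"
  shows "norm (u - v) powr p \<le> 2 powr p * (norm u powr p + norm v powr p)"
proof -
  have "norm (u - v) powr p \<le> (2 * max (norm u) (norm v)) powr p"
    using assms norm_triangle_ineq4[of u v] by (intro powr_mono2) auto
  also have "\<dots> = 2 powr p * max (norm u) (norm v) powr p"
    by (simp add: powr_mult)
  also have "max (norm u) (norm v) powr p \<le> norm u powr p + norm v powr p"
    by (simp add: max_def)
  finally show ?thesis by simp
qed

lemma lp_space_diff: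
  assumes "0 \<le> p" "x \<in> lp_space p" "y \<in> lp_space p"
  shows "(\<lambda>n. y n - x n) \<in> lp_space p"
proof -
  have "summable (\<lambda>n. 2 powr p * (norm (y n) powr p + norm (x n) powr p))"
    using assms by (intro summable_mult summable_add) (auto simp: lp_space_def)
  then show ?thesis
    unfolding lp_space_def mem_Collect_eq
    by (rule summable_comparison_test'[of _ 0]) (use norm_diff_powr_le[OF assms(1)] in auto)
qed

lemma norm_le_lp_norm:
  assumes "0 < p" "z \<in> lp_space p"
  shows "norm (z j) \<le> lp_norm p z"
proof -
  have "summable (\<lambda>n. norm (z n) powr p)" using assms by (simp add: lp_space_def)
  then have "norm (z j) powr p \<le> (\<Sum>n. norm (z n) powr p)"
    using sum_le_suminf[of "\<lambda>n. norm (z n) powr p" "{j}"] by simp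
  then have "(norm (z j) powr p) powr (1 / p) \<le> (\<Sum>n. norm (z n) powr p) powr (1 / p)"
    using assms by (intro powr_mono2) auto
  then show ?thesis using assms by (simp add: powr_powr lp_norm_def)
qed

lemma lp_norm_less:
  assumes "0 < p" "0 < e" "summable (\<lambda>n. norm (z n) powr p)" "(\<Sum>n. norm (z n) powr p) < e powr p"
  shows "lp_norm p z < e"
proof -
  have "lp_norm p z < (e powr p) powr (1 / p)"
    unfolding lp_norm_def using assms by (intro powr_less_mono2 suminf_nonneg) auto
  then show ?thesis using assms by (simp add: powr_powr)
qed

lemma lp_dist_powr_le_tails:
  assumes p: "0 \<le> p" and agree: "\<And>j. j < n \<Longrightarrow> x j = x0 j"
    and sx: "summable (\<lambda>i. norm (x (i + n)) powr p)"
    and sx0: "summable (\<lambda>i. norm (x0 (i + n)) powr p)"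
  shows "summable (\<lambda>j. norm (x j - x0 j) powr p)"
    "(\<Sum>j. norm (x j - x0 j) powr p)
       \<le> 2 powr p * ((\<Sum>i. norm (x (i + n)) powr p) + (\<Sum>i. norm (x0 (i + n)) powr p))"
proof -
  define D where "D = (\<lambda>j. norm (x j - x0 j) powr p)"
  define B where "B = (\<lambda>i. 2 powr p * (norm (x (i + n)) powr p + norm (x0 (i + n)) powr p))"
  have D_le: "D (i + n) \<le> B i" for i
    unfolding D_def B_def using p by (rule norm_diff_powr_le)
  have sB: "summable B"
    unfolding B_def using sx sx0 by (intro summable_mult summable_add)
  have sDn: "summable (\<lambda>i. D (i + n))"
    by (rule summable_comparison_test'[OF sB, of 0]) (simp add: D_def D_le[unfolded D_def])
  then show sD: "summable (\<lambda>j. norm (x j - x0 j) powr p)"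
    using summable_iff_shift[of D n] by (simp add: D_def)
  have "(\<Sum>j. norm (x j - x0 j) powr p) = (\<Sum>i. D (i + n)) + (\<Sum>i<n. D i)"
    unfolding D_def using sD by (rule suminf_split_initial_segment)
  also have "(\<Sum>i<n. D i) = 0"
    using p agree by (simp add: D_def)
  also have "(\<Sum>i. D (i + n)) \<le> suminf B"
    using D_le sDn sB by (intro suminf_le) simp_all
  also have "suminf B = 2 powr p * ((\<Sum>i. norm (x (i + n)) powr p) + (\<Sum>i. norm (x0 (i + n)) powr p))"
    unfolding B_def using sx sx0 by (simp add: suminf_mult summable_add suminf_add[symmetric])
  finally show "(\<Sum>j. norm (x j - x0 j) powr p)
       \<le> 2 powr p * ((\<Sum>i. norm (x (i + n)) powr p) + (\<Sum>i. norm (x0 (i + n)) powr p))"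
    by simp
qed

lemma suminf_le_split_bound:
  fixes a f :: "nat \<Rightarrow> real"
  assumes f: "summable f" "\<And>m. 0 \<le> f m"
    and a: "\<And>m. 0 \<le> a m" "\<And>m. a m \<le> c * f m" "\<And>m. m < M \<Longrightarrow> a m \<le> d * f m"
    and d: "0 \<le> d"
  shows "summable a" "suminf a \<le> d * suminf f + c * (\<Sum>i. f (i + M))"
proof -
  have cf: "summable (\<lambda>m. c * f m)" using f(1) by (rule summable_mult)
  show sa: "summable a"
    by (rule summable_comparison_test'[OF cf, of 0]) (use a in simp)
  have "suminf a = (\<Sum>i. a (i + M)) + (\<Sum>i<M. a i)"
    using sa by (rule suminf_split_initial_segment)
  also have "(\<Sum>i. a (i + M)) \<le> (\<Sum>i. c * f (i + M))"
    by (rule suminf_le) (use a(2) sa cf in \<open>simp_all add: summable_iff_shift\<close>)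
  also have "\<dots> = c * (\<Sum>i. f (i + M))"
    using f(1) by (intro suminf_mult) (simp add: summable_iff_shift)
  also have "(\<Sum>i<M. a i) \<le> (\<Sum>i<M. d * f i)"
    by (rule sum_mono) (simp add: a(3))
  also have "\<dots> \<le> d * suminf f"
    unfolding sum_distrib_left[symmetric] using d f by (intro mult_left_mono sum_le_suminf) auto
  finally show "suminf a \<le> d * suminf f + c * (\<Sum>i. f (i + M))" by simp
qed

lemma lp_shift_preimage_tail_small:
  assumes p: "1 \<le> p" and P: "\<And>m. 0 < P m" and exp: "expanding_shifts P C"
    and y: "y \<in> lp_space p" and \<delta>: "0 < \<delta>"
  obtains n where "K \<le> n" "summable (\<lambda>i. norm (shift_preimage P n x0 y (i + n)) powr p)"
    "(\<Sum>i. norm (shift_preimage P n x0 y (i + n)) powr p) < \<delta>"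
proof -
  have C: "0 < C" using expanding_shifts_const_pos[OF P exp] .
  define f where "f = (\<lambda>j. norm (y j) powr p)"
  have sf: "summable f" using y by (simp add: lp_space_def f_def)
  have f0: "0 \<le> f j" for j by (simp add: f_def)
  have Sf: "0 \<le> suminf f" using sf f0 by (rule suminf_nonneg)
  obtain M where M: "\<And>n. M \<le> n \<Longrightarrow> (\<Sum>i. f (i + n)) < \<delta> / (2 * C powr p)"
    using suminf_exist_split[OF _ sf, of "\<delta> / (2 * C powr p)"] \<delta> C by force
  define \<epsilon> where "\<epsilon> = (\<delta> / (2 * (suminf f + 1))) powr (1 / p)"
  have \<epsilon>: "0 < \<epsilon>" "\<epsilon> powr p = \<delta> / (2 * (suminf f + 1))"
    using \<delta> Sf p by (simp_all add: \<epsilon>_def powr_powr)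
  obtain n where n: "K \<le> n" "\<And>m. P m \<le> C * P (m + n)"
    "\<And>m. m < M \<Longrightarrow> P m \<le> \<epsilon> * P (m + n)"
    using expanding_shiftsD[OF exp \<epsilon>(1)] by blast
  define a where "a = (\<lambda>m. norm (shift_preimage P n x0 y (m + n)) powr p)"
  have a_le: "a m \<le> c powr p * f m" if "P m \<le> c * P (m + n)" "0 \<le> c" for m c
  proof -
    have "a m \<le> (c * norm (y m)) powr p"
      unfolding a_def using p that norm_shift_preimage_le[OF P that(1)]
      by (intro powr_mono2) auto
    then show ?thesis using that(2) by (simp add: powr_mult f_def)
  qed
  have a0: "0 \<le> a m" for m by (simp add: a_def)
  have aC: "a m \<le> C powr p * f m" for m using a_le n(2) C by simp
  have a\<epsilon>: "a m \<le> \<epsilon> powr p * f m" if "m < M" for m using a_le n(3)[OF that] \<epsilon>(1) by simp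
  note split_bound = suminf_le_split_bound[OF sf f0 a0 aC a\<epsilon> powr_ge_zero]
  have "suminf a \<le> \<epsilon> powr p * suminf f + C powr p * (\<Sum>i. f (i + M))"
    by (rule split_bound)
  also have "\<epsilon> powr p * suminf f \<le> \<delta> / 2"
    unfolding \<epsilon>(2) using Sf \<delta> by (simp add: field_simps)
  also have "C powr p * (\<Sum>i. f (i + M)) < \<delta> / 2"
    using M[OF order_refl] C by (simp add: field_simps)
  finally have "suminf a < \<delta>" by simp
  with split_bound(1) n(1) show ?thesis using that unfolding a_def by blast
qed

lemma lp_strongly_top_transitive_bshift:
  assumes p: "1 \<le> p" and P: "\<And>m. 0 < P m" and exp: "expanding_shifts P C"
  shows "strongly_top_transitive_on (lp_space p) (lp_norm p) (bshift (prod_weights P))"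
proof (rule strongly_top_transitive_onI)
  fix x0 y and e :: real
  assume x0: "x0 \<in> lp_space p" and y: "y \<in> lp_space p" and e: "0 < e"
  define \<delta> where "\<delta> = e powr p / (4 * 2 powr p)"
  have \<delta>: "0 < \<delta>" using e by (simp add: \<delta>_def)
  have sx0: "summable (\<lambda>j. norm (x0 j) powr p)" using x0 by (simp add: lp_space_def)
  obtain K where K: "\<And>n. K \<le> n \<Longrightarrow> (\<Sum>i. norm (x0 (i + n)) powr p) < \<delta>"
    using suminf_exist_split[OF \<delta> sx0] by force
  obtain n where n: "K \<le> n" and sx: "summable (\<lambda>i. norm (shift_preimage P n x0 y (i + n)) powr p)"
    and tail: "(\<Sum>i. norm (shift_preimage P n x0 y (i + n)) powr p) < \<delta>"
    using lp_shift_preimage_tail_small[OF p P exp y \<delta>] by blast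
  define x where "x = shift_preimage P n x0 y"
  note sx = sx[folded x_def] and tail = tail[folded x_def]
  have "0 \<le> p" using p by simp
  have agree: "x j = x0 j" if "j < n" for j using that by (simp add: x_def shift_preimage_def)
  have "summable (\<lambda>i. norm (x0 (i + n)) powr p)"
    using sx0 summable_iff_shift[of "\<lambda>j. norm (x0 j) powr p" n] by simp
  note dist = lp_dist_powr_le_tails[OF \<open>0 \<le> p\<close> agree sx this]
  have "(\<Sum>j. norm (x j - x0 j) powr p)
      \<le> 2 powr p * ((\<Sum>i. norm (x (i + n)) powr p) + (\<Sum>i. norm (x0 (i + n)) powr p))"
    by (rule dist(2))
  also have "\<dots> < 2 powr p * (2 * \<delta>)"
    using tail K[OF n] by (intro mult_strict_left_mono) auto
  also have "\<dots> < e powr p" using e by (simp add: \<delta>_def)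
  finally have "lp_norm p (\<lambda>j. x j - x0 j) < e"
    using p e dist(1) by (intro lp_norm_less) simp_all
  moreover have "x \<in> lp_space p"
    using sx summable_iff_shift[of "\<lambda>j. norm (x j) powr p" n] by (simp add: lp_space_def)
  moreover have "(bshift (prod_weights P) ^^ n) x = y"
    unfolding x_def using P by (rule funpow_bshift_shift_preimage)
  ultimately show "\<exists>n. \<exists>x\<in>lp_space p. lp_norm p (\<lambda>j. x j - x0 j) < e \<and> (bshift (prod_weights P) ^^ n) x = y"
    by blast
qed

lemma c0_space_coordinate_le:
  assumes "x \<in> c0_space" "y \<in> c0_space"
  shows "norm (y j - x j) \<le> c0_norm (\<lambda>n. y n - x n)"
proof -
  have "(\<lambda>n. y n - x n) \<longlonglongrightarrow> 0"
    using assms tendsto_diff by (fastforce simp: c0_space_def)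
  then have "Bseq (\<lambda>n. y n - x n)" by (rule convergent_imp_Bseq[OF convergentI])
  then obtain B where "\<And>n. norm (y n - x n) \<le> B" by (auto simp: Bseq_def)
  then have "bdd_above (range (\<lambda>n. norm (y n - x n)))" by (intro bdd_aboveI2)
  then show ?thesis unfolding c0_norm_def by (rule cSUP_upper2) auto
qed

lemma lp_space_coordinate_le:
  assumes "0 < p" "x \<in> lp_space p" "y \<in> lp_space p"
  shows "norm (y j - x j) \<le> lp_norm p (\<lambda>n. y n - x n)"
  using assms by (intro norm_le_lp_norm lp_space_diff) auto

lemma unit_vector_in_c0_space: "(\<lambda>n. if n = 0 then 1 else 0) \<in> c0_space"
  unfolding c0_space_def by (simp add: LIMSEQ_offset[where k = 1])

lemma unit_vector_in_lp_space: "(\<lambda>n. if n = 0 then 1 else 0) \<in> lp_space p"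
  unfolding lp_space_def mem_Collect_eq by (rule summable_finite[of "{0}"]) auto

lemma c0_not_mixing_bshift:
  assumes "\<And>m. 0 < P m" "infinite {k. P k \<le> P 0}"
  shows "\<not> mixing_on c0_space c0_norm (bshift (prod_weights P))"
proof (rule not_mixing_on_bshift_prod_weights[of P, OF assms])
  show "(\<lambda>n. 0) \<in> c0_space" by (simp add: c0_space_def)
qed (simp_all add: unit_vector_in_c0_space c0_space_coordinate_le)

lemma lp_not_mixing_bshift:
  assumes "0 < p" "\<And>m. 0 < P m" "infinite {k. P k \<le> P 0}"
  shows "\<not> mixing_on (lp_space p) (lp_norm p) (bshift (prod_weights P))"
proof (rule not_mixing_on_bshift_prod_weights[of P, OF assms(2,3)])
  show "(\<lambda>n. 0) \<in> lp_space p" by (simp add: lp_space_def)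
qed (simp_all add: assms(1) unit_vector_in_lp_space lp_space_coordinate_le)

section \<open>A height function with sparse zeros\<close>

definition bump_scale :: "nat \<Rightarrow> nat" where
  "bump_scale i = fact (i + 2)"

text \<open>A tent of height i + 1 peaking at r = bump_scale i: it rises with slope 1 and falls with
  slope 1 / bump_scale i, vanishing outside (bump_scale i - i - 1, (i + 2) * bump_scale i).\<close>
definition bump :: "nat \<Rightarrow> nat \<Rightarrow> real" where
  "bump i r = max 0 (min (real r + real i + 1 - real (bump_scale i))
                         (real i + 2 - real r / real (bump_scale i)))"

definition periodic_bump :: "nat \<Rightarrow> nat \<Rightarrow> real" where
  "periodic_bump i m = bump i (m mod bump_scale (Suc i))"

definition height :: "nat \<Rightarrow> real" where
  "height m = Max ((\<lambda>i. periodic_bump i m) ` {..m})"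

lemma bump_scale_Suc: "bump_scale (Suc i) = (i + 3) * bump_scale i"
  by (simp add: bump_scale_def algebra_simps)

lemma bump_scale_pos: "0 < bump_scale i"
  by (simp add: bump_scale_def)

lemma bump_scale_dvd: "i \<le> j \<Longrightarrow> bump_scale i dvd bump_scale j"
  unfolding bump_scale_def by (rule fact_dvd) simp

lemma bump_scale_mono: "i \<le> j \<Longrightarrow> bump_scale i \<le> bump_scale j"
  unfolding bump_scale_def by (rule fact_mono) simp

lemma bump_scale_ge: "i + 2 \<le> bump_scale i"
  unfolding bump_scale_def by (rule fact_ge_self)

lemma double_le_bump_scale: "2 * i \<le> bump_scale i"
proof -
  have "2 * i \<le> (i + 2) * (i + 1) * 1" by simp
  also have "\<dots> \<le> (i + 2) * (i + 1) * fact i"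
    using fact_ge_1[where n = i and 'a = nat] by (intro mult_le_mono2) simp
  also have "\<dots> = bump_scale i" by (simp add: bump_scale_def algebra_simps)
  finally show ?thesis .
qed

lemma bump_nonneg: "0 \<le> bump i r"
  by (simp add: bump_def)

lemma bump_0: "bump i 0 = 0"
  using bump_scale_ge[of i] by (simp add: bump_def)

lemma bump_eq_0_before: "real r + real i + 1 \<le> real (bump_scale i) \<Longrightarrow> bump i r = 0"
  by (simp add: bump_def)

lemma bump_eq_0_after:
  assumes "(real i + 2) * real (bump_scale i) \<le> real r"
  shows "bump i r = 0"
proof -
  have "real i + 2 \<le> real r / real (bump_scale i)"
    using assms bump_scale_pos[of i] by (simp add: field_simps)
  then show ?thesis by (simp add: bump_def)
qed

lemma bump_add_ge:
  assumes "d \<le> bump_scale i"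
  shows "bump i r - 1 \<le> bump i (r + d)"
proof -
  have "real d / real (bump_scale i) \<le> 1"
    using assms bump_scale_pos[of i] by simp
  then have "real i + 2 - real r / real (bump_scale i) - 1 \<le> real i + 2 - real (r + d) / real (bump_scale i)"
    by (simp add: add_divide_distrib)
  then show ?thesis unfolding bump_def by (auto simp: max_def min_def)
qed

lemma bump_Suc_le: "bump i (Suc r) \<le> bump i r + 1"
proof -
  have "real r / real (bump_scale i) \<le> real (Suc r) / real (bump_scale i)"
    by (simp add: divide_right_mono)
  then show ?thesis unfolding bump_def by (auto simp: max_def min_def)
qed

lemma periodic_bump_nonneg: "0 \<le> periodic_bump i m"
  by (simp add: periodic_bump_def bump_nonneg)

lemma periodic_bump_Suc_le: "periodic_bump i (Suc m) \<le> periodic_bump i m + 1"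
proof (cases "Suc (m mod bump_scale (Suc i)) < bump_scale (Suc i)")
  case True
  then have "Suc m mod bump_scale (Suc i) = Suc (m mod bump_scale (Suc i))"
    by (simp add: mod_Suc)
  then show ?thesis unfolding periodic_bump_def using bump_Suc_le by simp
next
  case False
  then have "Suc m mod bump_scale (Suc i) = 0"
    using bump_scale_pos mod_Suc by (metis mod_less_divisor not_less_eq)
  then show ?thesis unfolding periodic_bump_def using bump_0 bump_nonneg by simp
qed

text \<open>Shifting by a scale at most bump_scale i lowers the i-th bump by at most 1, because
  it falls slowly or lands in the zero region; larger scales are multiples of its period.\<close>
lemma periodic_bump_shift_ge: "periodic_bump i m - 1 \<le> periodic_bump i (m + bump_scale t)"
proof (cases "t \<le> i")
  case False
  then have "bump_scale (Suc i) dvd bump_scale t" by (intro bump_scale_dvd) simp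
  then obtain k where "bump_scale t = bump_scale (Suc i) * k" ..
  then have "(m + bump_scale t) mod bump_scale (Suc i) = m mod bump_scale (Suc i)" by simp
  then show ?thesis by (simp add: periodic_bump_def)
next
  case True
  let ?P = "bump_scale (Suc i)" and ?r = "m mod bump_scale (Suc i)"
  have d: "bump_scale t \<le> bump_scale i" using True by (rule bump_scale_mono)
  show ?thesis
  proof (cases "?r + bump_scale t < ?P")
    case True
    have "(m + bump_scale t) mod ?P = (?r + bump_scale t) mod ?P"
      by (simp add: mod_add_left_eq)
    also have "\<dots> = ?r + bump_scale t" using True by simp
    finally show ?thesis unfolding periodic_bump_def using bump_add_ge[OF d, of ?r] by simp
  next
    case False
    then have "(i + 2) * bump_scale i \<le> ?r"
      using d bump_scale_Suc[of i] by (simp add: algebra_simps)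
    then have "(real i + 2) * real (bump_scale i) \<le> real ?r"
      by (metis of_nat_add of_nat_le_iff of_nat_mult of_nat_numeral)
    then have "periodic_bump i m = 0" unfolding periodic_bump_def by (rule bump_eq_0_after)
    then show ?thesis using periodic_bump_nonneg[of i "m + bump_scale t"] by simp
  qed
qed

lemma periodic_bump_peak:
  assumes "m \<le> bump_scale t"
  shows "real t \<le> periodic_bump t (bump_scale t + m)"
proof -
  have "bump_scale t + m < bump_scale (Suc t)"
    using assms bump_scale_Suc[of t] bump_scale_pos[of t] by (simp add: algebra_simps)
  then have mod_eq: "(bump_scale t + m) mod bump_scale (Suc t) = bump_scale t + m" by simp
  have "real m / real (bump_scale t) \<le> 1"
    using assms bump_scale_pos[of t] by simp
  moreover have "real (bump_scale t + m) / real (bump_scale t) = 1 + real m / real (bump_scale t)"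
    using bump_scale_pos[of t] by (simp add: field_simps)
  ultimately show ?thesis
    unfolding periodic_bump_def mod_eq bump_def by (auto simp: max_def min_def)
qed

lemma periodic_bump_below_index: "m < i \<Longrightarrow> periodic_bump i m = 0"
proof -
  assume m: "m < i"
  have "m < bump_scale (Suc i)" using m bump_scale_ge[of "Suc i"] by simp
  moreover have "real m + real i + 1 \<le> real (bump_scale i)"
    using m double_le_bump_scale[of i] by linarith
  ultimately show ?thesis unfolding periodic_bump_def by (simp add: bump_eq_0_before)
qed

lemma periodic_bump_zero: "periodic_bump i ((T + 2) * bump_scale T) = 0"
proof -
  let ?k = "(T + 2) * bump_scale T"
  consider "i < T" | "i = T" | "T < i" by linarith
  then show ?thesis
  proof cases
    case 1
    then have "bump_scale (Suc i) dvd bump_scale T" by (intro bump_scale_dvd) simp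
    then have "?k mod bump_scale (Suc i) = 0" by simp
    then show ?thesis by (simp add: periodic_bump_def bump_0)
  next
    case 2
    have "?k < bump_scale (Suc T)"
      using bump_scale_Suc[of T] bump_scale_pos[of T] by (simp add: algebra_simps)
    then have "?k mod bump_scale (Suc T) = ?k" by simp
    then show ?thesis unfolding periodic_bump_def 2
      by (simp only:) (rule bump_eq_0_after, simp add: algebra_simps)
  next
    case 3
    then obtain j where j: "i = Suc j" "T \<le> j" by (metis Suc_le_eq lessE less_or_eq_imp_le)
    have "?k \<le> (j + 2) * bump_scale j"
      using j(2) bump_scale_mono[OF j(2)] by (intro mult_le_mono) simp_all
    then have k: "?k + i + 1 \<le> bump_scale i"
      using j bump_scale_Suc[of j] bump_scale_ge[of j] by (simp add: algebra_simps)
    then have "?k < bump_scale (Suc i)" using bump_scale_mono[of i "Suc i"] by simp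
    moreover have "real ?k + real i + 1 \<le> real (bump_scale i)"
      using k by (metis of_nat_add of_nat_le_iff of_nat_1)
    ultimately show ?thesis unfolding periodic_bump_def by (simp add: bump_eq_0_before)
  qed
qed

lemma periodic_bump_le_height: "periodic_bump i m \<le> height m"
proof (cases "i \<le> m")
  case True
  then show ?thesis unfolding height_def by (intro Max_ge) auto
next
  case False
  then have "periodic_bump i m = 0" by (simp add: periodic_bump_below_index)
  also have "\<dots> \<le> periodic_bump 0 m" by (rule periodic_bump_nonneg)
  also have "\<dots> \<le> height m" unfolding height_def by (intro Max_ge) auto
  finally show ?thesis .
qed

lemma height_attained: "\<exists>i. height m = periodic_bump i m"
proof -
  have "height m \<in> (\<lambda>i. periodic_bump i m) ` {..m}"
    unfolding height_def by (intro Max_in) auto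
  then show ?thesis by auto
qed

lemma height_0: "height 0 = 0"
  by (simp add: height_def periodic_bump_def bump_0)

lemma height_Suc_le: "height (Suc m) \<le> height m + 1"
proof -
  obtain i where "height (Suc m) = periodic_bump i (Suc m)" using height_attained by blast
  then show ?thesis using periodic_bump_Suc_le[of i m] periodic_bump_le_height[of i m] by simp
qed

lemma height_le: "height m \<le> real m"
proof (induction m)
  case (Suc m)
  then show ?case using height_Suc_le[of m] by simp
qed (simp add: height_0)

lemma height_shift_ge: "height m - 1 \<le> height (m + bump_scale t)"
proof -
  obtain i where "height m = periodic_bump i m" using height_attained by blast
  then show ?thesis
    using periodic_bump_shift_ge[of i m t] periodic_bump_le_height[of i "m + bump_scale t"] by simp
qed

lemma height_peak: "m \<le> bump_scale t \<Longrightarrow> real t \<le> height (bump_scale t + m)"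
  using periodic_bump_peak periodic_bump_le_height order_trans by blast

lemma height_zero: "height ((T + 2) * bump_scale T) = 0"
  using height_attained[of "(T + 2) * bump_scale T"] periodic_bump_zero by simp

lemma infinite_height_zeros: "infinite {k. height k = 0}"
  unfolding infinite_nat_iff_unbounded
proof
  fix m
  have "bump_scale m \<le> (m + 2) * bump_scale m" by simp
  then have "m < (m + 2) * bump_scale m" using bump_scale_ge[of m] by linarith
  then show "\<exists>k>m. k \<in> {k. height k = 0}" using height_zero by blast
qed

lemma exists_two_powr_diff_le:
  assumes "0 < \<epsilon>"
  obtains t where "K \<le> t" "2 powr (real M - real t) \<le> \<epsilon>"
proof -
  obtain n where n: "2 ^ M / \<epsilon> < (2::real) ^ n"
    using real_arch_pow[of 2 "2 ^ M / \<epsilon>"] by auto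
  have "2 powr (real M - real (n + K)) = 2 ^ M / 2 ^ (n + K)"
    by (simp add: powr_diff powr_realpow del: of_nat_add)
  also have "\<dots> \<le> 2 ^ M / 2 ^ n"
    by (intro divide_left_mono power_increasing) auto
  also have "\<dots> \<le> \<epsilon>" using n assms by (simp add: field_simps)
  finally show ?thesis using that[of "n + K"] by simp
qed

lemma expanding_shifts_height: "expanding_shifts (\<lambda>m. 2 powr height m) 2"
  unfolding expanding_shifts_def
proof (intro allI impI)
  fix M K :: nat and \<epsilon> :: real
  assume "0 < \<epsilon>"
  then obtain t where t: "K + M \<le> t" "2 powr (real M - real t) \<le> \<epsilon>"
    by (rule exists_two_powr_diff_le)
  define n where "n = bump_scale t"
  have tn: "t \<le> n" using bump_scale_ge[of t] by (simp add: n_def)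
  have "2 powr height m \<le> 2 * 2 powr height (m + n)" for m
  proof -
    have "2 powr height m \<le> 2 powr (1 + height (m + n))"
      using height_shift_ge[of m t] by (intro powr_mono) (auto simp: n_def)
    then show ?thesis by (simp add: powr_add)
  qed
  moreover have "2 powr height m \<le> \<epsilon> * 2 powr height (m + n)" if "m < M" for m
  proof -
    have "height m \<le> real M" using height_le[of m] that by simp
    moreover have "real t \<le> height (m + n)"
      using height_peak[of m t] that t(1) tn by (simp add: n_def add.commute)
    ultimately have "2 powr height m \<le> 2 powr ((real M - real t) + height (m + n))"
      by (intro powr_mono) auto
    also have "\<dots> \<le> \<epsilon> * 2 powr height (m + n)"
      using t(2) by (simp add: powr_add)
    finally show ?thesis .
  qed
  ultimately show "\<exists>n\<ge>K. (\<forall>m. 2 powr height m \<le> 2 * 2 powr height (m + n)) \<and>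
                   (\<forall>m<M. 2 powr height m \<le> \<epsilon> * 2 powr height (m + n))"
    using t(1) tn by (intro exI[of _ n]) auto
qed

theorem theorem1p1:
  fixes X :: "(nat \<Rightarrow> complex) set" and N :: "(nat \<Rightarrow> complex) \<Rightarrow> real"
  assumes "(X = c0_space \<and> N = c0_norm) \<or>
           (\<exists>p::real. 1 \<le> p \<and> X = lp_space p \<and> N = lp_norm p)"
  shows "\<exists>w :: nat \<Rightarrow> real. bdd_above (range w) \<and> (\<forall>n. 0 < w n) \<and>
           strongly_top_transitive_on X N (bshift w) \<and> \<not> mixing_on X N (bshift w)"
proof -
  define P where "P m = 2 powr height m" for m
  have P: "0 < P m" for m by (simp add: P_def)
  have expanding: "expanding_shifts P 2"
    using expanding_shifts_height unfolding P_def .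
  have "{k. height k = 0} \<subseteq> {k. P k \<le> P 0}" by (auto simp: P_def height_0)
  then have returns: "infinite {k. P k \<le> P 0}" using infinite_height_zeros by (rule infinite_super)
  have bounded: "bdd_above (range (prod_weights P))"
  proof (rule bdd_above_prod_weights)
    show "P (Suc m) \<le> 2 * P m" for m
      unfolding P_def using powr_mono[OF height_Suc_le[of m], of 2] by (simp add: powr_add)
  qed (fact P)
  have "strongly_top_transitive_on X N (bshift (prod_weights P)) \<and>
        \<not> mixing_on X N (bshift (prod_weights P))"
    using assms
  proof (elim disjE exE conjE)
    assume "X = c0_space" "N = c0_norm"
    with P expanding returns show ?thesis
      by (simp add: c0_strongly_top_transitive_bshift c0_not_mixing_bshift)
  next
    fix p :: real assume "1 \<le> p" "X = lp_space p" "N = lp_norm p"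
    with P expanding returns show ?thesis
      by (simp add: lp_strongly_top_transitive_bshift lp_not_mixing_bshift)
  qed
  with bounded P show ?thesis by (blast intro: prod_weights_pos)
qed

end
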